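(* For $n\ge1$ let $N^{(n)}\in\{0,1,\dots\}$ with $N^{(n)}\to\infty$, and let $\bm\alpha^{(n)}=(\alpha^{(n)}_j)_{j\ge1}$, $\bm\beta^{(n)}=(\beta^{(n)}_j)_{j\ge1}$ be positive sequences with $\alpha^{(n)}_j\to\alpha_j>0$ and $\beta^{(n)}_j\to\beta_j>0$ as $n\to\infty$ for every $j$. Let $\bm\psi^{(n)}=(\psi^{(n)}_j)_{j\ge1}$ be Beta-Binomial transitions with parameters $(N^{(n)},\bm\alpha^{(n)},\bm\beta^{(n)})$. Then for every $j\ge1$ and every sequence $u_n\to u$ in $[0,1]$, $\psi^{(n)}_j(u_n,\cdot)\to\delta_{\Upsilon_j(u)}$ weakly, where $\Upsilon_j=F_{j+1}^{-1}\circ F_j$ with $F_j(v)=\mathcal I_v(\alpha_j,\beta_j)$.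
   Context: $\mathcal I_v(a,b)$ denotes the regularized incomplete Beta function, i.e. the distribution function of $\mathrm{Beta}(a,b)$ at $v$. Beta-Binomial transitions with parameters $(N,\bm\alpha,\bm\beta)$ ($N\in\{0,1,\dots\}$, $\bm\alpha,\bm\beta$ positive sequences) are the kernels $\psi_j(v,du)=\sum_{z=0}^N\mathrm{Beta}(du\mid\alpha_{j+1}+z,\beta_{j+1}+N-z)\binom Nz\Upsilon^{\bm\alpha,\bm\beta}_j(v)^z(1-\Upsilon^{\bm\alpha,\bm\beta}_j(v))^{N-z}$ where $\Upsilon^{\bm\alpha,\bm\beta}_j=G_{j+1}^{-1}\circ G_j$, $G_j(v)=\mathcal I_v(\alpha_j,\beta_j)$. *)

theory Defs
  imports "HOL-Probability.Probability"
begin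

definition beta_density :: "real \<Rightarrow> real \<Rightarrow> real \<Rightarrow> real" where
  "beta_density a b x =
     indicator {0<..<1} x * (x powr (a - 1) * (1 - x) powr (b - 1)) / Beta a b"

definition beta_measure :: "real \<Rightarrow> real \<Rightarrow> real measure" where
  "beta_measure a b = density lborel (\<lambda>x. ennreal (beta_density a b x))"

definition reg_inc_beta :: "real \<Rightarrow> real \<Rightarrow> real \<Rightarrow> real" where
  "reg_inc_beta v a b = measure (beta_measure a b) {..v}"

definition Gfun :: "(nat \<Rightarrow> real) \<Rightarrow> (nat \<Rightarrow> real) \<Rightarrow> nat \<Rightarrow> real \<Rightarrow> real" where
  "Gfun al bl j v = reg_inc_beta v (al j) (bl j)"

definition Upsilon :: "(nat \<Rightarrow> real) \<Rightarrow> (nat \<Rightarrow> real) \<Rightarrow> nat \<Rightarrow> real \<Rightarrow> real" where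
  "Upsilon al bl j v = the_inv_into {0..1} (Gfun al bl (Suc j)) (Gfun al bl j v)"

definition bb_kernel ::
    "nat \<Rightarrow> (nat \<Rightarrow> real) \<Rightarrow> (nat \<Rightarrow> real) \<Rightarrow> nat \<Rightarrow> real \<Rightarrow> real measure" where
  "bb_kernel N al bl j v =
     (let p = Upsilon al bl j v in
      density lborel (\<lambda>x. ennreal (\<Sum>z\<in>{0..N}.
         real (N choose z) * p ^ z * (1 - p) ^ (N - z) *
         beta_density (al (Suc j) + real z) (bl (Suc j) + real (N - z)) x)))"

end

theory Submission
  imports Defs
begin

(* The kernel psi_j(u_n, .) is a Binomial(N, p_n) mixture of the laws Beta(a + z, b + N - z),
   where a = alpha_{j+1}, b = beta_{j+1} and p_n = Upsilon_j^(n)(u_n). Its mean squared deviation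
   from p_n has the closed form (2 p (1 - p) N + O(1)) / ((a + b + N) (a + b + N + 1)), which is
   O(1/N); by Chebyshev's inequality the kernel therefore concentrates at p_n, and it suffices to
   show p_n -> Upsilon_j(u). The distribution functions G_j^(n) converge pointwise to G_j
   (dominated convergence in the Beta parameters); since they are monotone and G_j is continuous,
   G_j^(n)(u_n) -> G_j(u), and since G_{j+1} is strictly increasing on [0,1], this convergence
   passes through the inverses of the G_{j+1}^(n). *)

definition beta_integrand :: "real \<Rightarrow> real \<Rightarrow> real \<Rightarrow> real" where
  "beta_integrand a b x = x powr (a - 1) * (1 - x) powr (b - 1)"

lemma beta_integrand_nonneg: "0 \<le> beta_integrand a b x"
  unfolding beta_integrand_def by simp

lemma beta_integrand_pos: "0 < x \<Longrightarrow> x < 1 \<Longrightarrow> 0 < beta_integrand a b x"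
  unfolding beta_integrand_def by simp

lemma beta_integrand_mono_params:
  "0 \<le> x \<Longrightarrow> x \<le> 1 \<Longrightarrow> a' \<le> a \<Longrightarrow> b' \<le> b \<Longrightarrow> beta_integrand a b x \<le> beta_integrand a' b' x"
  unfolding beta_integrand_def by (intro mult_mono powr_mono') auto

lemma tendsto_beta_integrand_params:
  "an \<longlonglongrightarrow> a \<Longrightarrow> bn \<longlonglongrightarrow> b \<Longrightarrow> (\<lambda>n. beta_integrand (an n) (bn n) x) \<longlonglongrightarrow> beta_integrand a b x"
  unfolding beta_integrand_def
  by (cases "x = 0 \<or> x = 1") (auto, intro tendsto_intros, auto)

lemma power_mult_beta_integrand: "0 < x \<Longrightarrow> x ^ k * beta_integrand a b x = beta_integrand (a + k) b x"
proof -
  assume "0 < x"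
  then have "x ^ k * x powr (a - 1) = x powr (a + k - 1)"
    by (simp add: powr_realpow[symmetric] powr_add[symmetric] add_diff_eq add.commute)
  then show ?thesis
    unfolding beta_integrand_def by (simp add: mult.assoc)
qed

lemma has_integral_beta_integrand:
  "0 < a \<Longrightarrow> 0 < b \<Longrightarrow> (beta_integrand a b has_integral Beta a b) {0..1}"
  unfolding beta_integrand_def by (rule has_integral_Beta_real)

lemma beta_integrand_integrable_on:
  "0 < a \<Longrightarrow> 0 < b \<Longrightarrow> 0 \<le> v \<Longrightarrow> w \<le> 1 \<Longrightarrow> beta_integrand a b integrable_on {v..w}"
  by (rule integrable_on_subinterval[OF has_integral_integrable[OF has_integral_beta_integrand]]) auto

lemma Beta_real_pos: "0 < a \<Longrightarrow> 0 < b \<Longrightarrow> 0 < Beta a (b::real)"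
  unfolding Beta_def by simp

lemma Beta_plus1_left_ratio: "0 < a \<Longrightarrow> 0 < b \<Longrightarrow> Beta (a + 1) b / Beta a b = a / (a + (b::real))"
proof -
  assume "0 < a" "0 < b"
  moreover from \<open>0 < a\<close> have "a \<notin> \<int>\<^sub>\<le>\<^sub>0" by (auto elim!: nonpos_Ints_cases)
  ultimately show ?thesis
    using Beta_plus1_left[of a b] Beta_real_pos[of a b] by (simp add: field_simps)
qed

lemma tendsto_Beta_real:
  fixes an bn :: "nat \<Rightarrow> real"
  assumes "an \<longlonglongrightarrow> a" "bn \<longlonglongrightarrow> b" "0 < a" "0 < b"
  shows "(\<lambda>n. Beta (an n) (bn n)) \<longlonglongrightarrow> Beta a b"
  unfolding Beta_def using assms
  by (intro tendsto_intros) (auto elim!: nonpos_Ints_cases simp: Gamma_real_pos[THEN less_imp_neq, symmetric])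

lemma beta_density_eq:
  "beta_density a b x = (if x \<in> {0<..<1} then beta_integrand a b x / Beta a b else 0)"
  unfolding beta_density_def beta_integrand_def by simp

lemma beta_density_nonneg: "0 < a \<Longrightarrow> 0 < b \<Longrightarrow> 0 \<le> beta_density a b x"
  unfolding beta_density_eq by (simp add: beta_integrand_nonneg Beta_real_pos less_imp_le)

lemma borel_measurable_beta_density [measurable]: "beta_density a b \<in> borel_measurable borel"
  unfolding beta_density_def by measurable

lemma has_integral_beta_density_moment:
  assumes "0 < a" "0 < b"
  shows "((\<lambda>x. x ^ k * beta_density a b x) has_integral Beta (a + k) b / Beta a b) UNIV"
proof -
  have "((\<lambda>x. beta_integrand (a + k) b x / Beta a b) has_integral Beta (a + k) b / Beta a b) {0<..<1}"
    using has_integral_beta_integrand[of "a + k" b] assms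
    by (intro has_integral_divide) (simp add: has_integral_Icc_iff_Ioo)
  moreover have "(\<lambda>x. x ^ k * beta_density a b x) =
      (\<lambda>x. if x \<in> {0<..<1} then beta_integrand (a + k) b x / Beta a b else 0)"
    by (auto simp: beta_density_eq power_mult_beta_integrand)
  ultimately show ?thesis
    by (simp only: has_integral_restrict_UNIV)
qed

lemma has_integral_beta_density:
  "0 < a \<Longrightarrow> 0 < b \<Longrightarrow> (beta_density a b has_integral 1) UNIV"
  using has_integral_beta_density_moment[of a b 0] Beta_real_pos[of a b] by simp

lemma has_integral_beta_density_sq_dev:
  assumes a: "0 < a" and b: "0 < b"
  shows "((\<lambda>x. (x - p)\<^sup>2 * beta_density a b x) has_integral
           a * (a + 1) / ((a + b) * (a + b + 1)) - 2 * p * (a / (a + b)) + p\<^sup>2) UNIV"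
proof -
  have "Beta (a + 2) b / Beta a b = (Beta (a + 1 + 1) b / Beta (a + 1) b) * (Beta (a + 1) b / Beta a b)"
    using Beta_real_pos[of "a + 1" b] a b by (simp add: add.assoc)
  also have "\<dots> = a * (a + 1) / ((a + b) * (a + b + 1))"
    using a b Beta_plus1_left_ratio[of "a + 1" b] Beta_plus1_left_ratio[of a b] by (simp add: ac_simps)
  finally have m2: "Beta (a + 2) b / Beta a b = a * (a + 1) / ((a + b) * (a + b + 1))" .
  have "((\<lambda>x. x ^ 2 * beta_density a b x - 2 * p * (x ^ 1 * beta_density a b x) + p\<^sup>2 * beta_density a b x)
          has_integral Beta (a + 2) b / Beta a b - 2 * p * (Beta (a + 1) b / Beta a b) + p\<^sup>2 * 1) UNIV"
    using has_integral_beta_density_moment[OF a b, of 2] has_integral_beta_density_moment[OF a b, of 1]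
      has_integral_beta_density[OF a b]
    by (intro has_integral_add has_integral_diff has_integral_mult_right) simp_all
  then show ?thesis
    unfolding m2 Beta_plus1_left_ratio[OF a b] by (simp add: power2_eq_square algebra_simps)
qed

lemma prob_space_density_has_integral:
  fixes g :: "real \<Rightarrow> real"
  assumes [measurable]: "g \<in> borel_measurable borel"
    and nonneg: "\<And>x. 0 \<le> g x" and total: "(g has_integral 1) UNIV"
  shows "prob_space (density lborel g)"
proof (rule prob_spaceI)
  have "emeasure (density lborel g) UNIV = (\<integral>\<^sup>+ x. indicator UNIV x * g x \<partial>lborel)"
    by (simp add: emeasure_density)
  also have "\<dots> = 1"
    using nn_integral_has_integral_lebesgue[OF _ total] nonneg by simp
  finally show "emeasure (density lborel g) (space (density lborel g)) = 1"
    by simp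
qed

lemma measure_density_Chebyshev:
  fixes g :: "real \<Rightarrow> real"
  assumes [measurable]: "g \<in> borel_measurable borel"
    and nonneg: "\<And>x. 0 \<le> g x" and sq_dev: "((\<lambda>x. (x - p)\<^sup>2 * g x) has_integral V) UNIV"
    and d: "0 < d"
  shows "measure (density lborel g) {x. d \<le> \<bar>x - p\<bar>} \<le> V / d\<^sup>2"
proof -
  have scaled: "((\<lambda>x. (x - p)\<^sup>2 * g x / d\<^sup>2) has_integral V / d\<^sup>2) UNIV"
    using has_integral_divide[OF sq_dev] .
  have "0 \<le> V / d\<^sup>2"
    by (rule has_integral_nonneg[OF scaled]) (simp add: nonneg)
  have "emeasure (density lborel g) {x. d \<le> \<bar>x - p\<bar>} =
      (\<integral>\<^sup>+ x. ennreal (g x) * indicator {x. d \<le> \<bar>x - p\<bar>} x \<partial>lborel)"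
    by (rule emeasure_density) auto
  also have "\<dots> \<le> (\<integral>\<^sup>+ x. indicator UNIV x * ((x - p)\<^sup>2 * g x / d\<^sup>2) \<partial>lborel)"
  proof (intro nn_integral_mono)
    fix x
    show "ennreal (g x) * indicator {x. d \<le> \<bar>x - p\<bar>} x \<le> ennreal (indicator UNIV x * ((x - p)\<^sup>2 * g x / d\<^sup>2))"
    proof (cases "d \<le> \<bar>x - p\<bar>")
      case True
      then have "d\<^sup>2 * g x \<le> (x - p)\<^sup>2 * g x"
        using power_mono[OF True, of 2] d nonneg[of x] by (intro mult_right_mono) auto
      then show ?thesis
        using True d by (simp add: field_simps ennreal_leI)
    qed simp
  qed
  also have "\<dots> = ennreal (V / d\<^sup>2)"
    using nn_integral_has_integral_lebesgue[OF _ scaled] nonneg by simp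
  finally show ?thesis
    using \<open>0 \<le> V / d\<^sup>2\<close> by (simp add: measure_def enn2real_leI)
qed

lemma cdf_return: "cdf (return lborel c) x = (if c \<le> x then 1 else 0)"
  by (simp add: cdf_def measure_return indicator_def)

lemma weak_conv_m_return_if_concentrating:
  assumes prob: "\<And>n. prob_space (M n)" and sets: "\<And>n. sets (M n) = sets borel"
    and p: "p \<longlonglongrightarrow> c"
    and concentr: "\<And>d. 0 < d \<Longrightarrow> (\<lambda>n. measure (M n) {x. d \<le> \<bar>x - p n\<bar>}) \<longlonglongrightarrow> 0"
  shows "weak_conv_m M (return lborel c)"
  unfolding weak_conv_m_def weak_conv_def
proof (intro allI impI)
  fix x assume cont: "isCont (cdf (return lborel c)) x"
  have vanishing: "(\<lambda>n. measure (M n) A) \<longlonglongrightarrow> 0"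
    if "A \<in> sets borel" "0 < d" "\<forall>\<^sub>F n in sequentially. A \<subseteq> {x. d \<le> \<bar>x - p n\<bar>}" for A d
  proof (rule tendsto_sandwich[OF _ _ tendsto_const concentr[OF \<open>0 < d\<close>]])
    show "\<forall>\<^sub>F n in sequentially. measure (M n) A \<le> measure (M n) {x. d \<le> \<bar>x - p n\<bar>}"
      using that(3) by eventually_elim
        (intro finite_measure.finite_measure_mono prob_space.finite_measure[OF prob], auto simp: sets that(1))
  qed simp
  interpret return_distr: real_distribution "return lborel c"
    by (auto simp: real_distribution_def real_distribution_axioms_def prob_space_return)
  have "x \<noteq> c"
    using cont return_distr.isCont_cdf by (auto simp: measure_return)
  then consider "x < c" | "c < x" by linarith
  then show "(\<lambda>n. cdf (M n) x) \<longlonglongrightarrow> cdf (return lborel c) x"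
  proof cases
    case 1
    have "\<forall>\<^sub>F n in sequentially. (x + c) / 2 < p n"
      using p 1 by (intro order_tendstoD) auto
    then have "\<forall>\<^sub>F n in sequentially. {..x} \<subseteq> {y. (c - x) / 2 \<le> \<bar>y - p n\<bar>}"
      by eventually_elim (auto simp: abs_if)
    then show ?thesis
      unfolding cdf_return using vanishing[of "{..x}" "(c - x) / 2"] 1 by (simp add: cdf_def)
  next
    case 2
    have "\<forall>\<^sub>F n in sequentially. p n < (x + c) / 2"
      using p 2 by (intro order_tendstoD) auto
    then have "\<forall>\<^sub>F n in sequentially. {x<..} \<subseteq> {y. (x - c) / 2 \<le> \<bar>y - p n\<bar>}"
      by eventually_elim (auto simp: abs_if)
    then have "(\<lambda>n. 1 - measure (M n) {x<..}) \<longlonglongrightarrow> 1 - 0"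
      using vanishing[of "{x<..}" "(x - c) / 2"] 2 by (intro tendsto_diff) auto
    moreover have "cdf (M n) x = 1 - measure (M n) {x<..}" for n
      using prob_space.prob_compl[OF prob, of "{x<..}" n] sets_eq_imp_space_eq[OF sets[of n]]
      by (simp add: cdf_def sets Compl_eq_Diff_UNIV[symmetric])
    ultimately show ?thesis
      unfolding cdf_return using 2 by simp
  qed
qed

lemma prob_space_beta_measure: "0 < a \<Longrightarrow> 0 < b \<Longrightarrow> prob_space (beta_measure a b)"
  unfolding beta_measure_def
  by (intro prob_space_density_has_integral has_integral_beta_density beta_density_nonneg) auto

lemma reg_inc_beta_eq_integral:
  assumes a: "0 < a" and b: "0 < b"
  shows "reg_inc_beta v a b = integral {0..max 0 (min v 1)} (beta_integrand a b) / Beta a b"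
proof -
  define w where "w = max 0 (min v 1)"
  have w: "0 \<le> w" "w \<le> 1" unfolding w_def by auto
  have integral: "((\<lambda>x. beta_integrand a b x / Beta a b) has_integral
      integral {0..w} (beta_integrand a b) / Beta a b) {0..w}"
    by (intro has_integral_divide integrable_integral beta_integrand_integrable_on a b w order_refl)
  have "emeasure (beta_measure a b) {..v} =
      (\<integral>\<^sup>+ x. ennreal (beta_density a b x) * indicator {..v} x \<partial>lborel)"
    unfolding beta_measure_def by (rule emeasure_density) auto
  \<comment> \<open>Since \<open>0 powr _ = 0\<close>, the integrand vanishes at 0 and 1, so the closed interval may be used.\<close>
  also have "\<dots> = (\<integral>\<^sup>+ x. ennreal (indicator {0..w} x * (beta_integrand a b x / Beta a b)) \<partial>lborel)"
    by (intro nn_integral_cong)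
      (auto simp: beta_density_eq indicator_def w_def beta_integrand_def)
  also have "\<dots> = ennreal (integral {0..w} (beta_integrand a b) / Beta a b)"
    using nn_integral_has_integral_lebesgue[OF _ integral]
    by (simp add: beta_integrand_nonneg Beta_real_pos[OF a b] less_imp_le)
  finally show ?thesis
    unfolding reg_inc_beta_def w_def[symmetric]
    using beta_integrand_nonneg Beta_real_pos[OF a b]
    by (simp add: measure_def integral_nonneg beta_integrand_integrable_on a b w)
qed

lemma reg_inc_beta_mono: "0 < a \<Longrightarrow> 0 < b \<Longrightarrow> mono (\<lambda>v. reg_inc_beta v a b)"
  unfolding reg_inc_beta_def
  by (intro monoI finite_measure.finite_measure_mono prob_space.finite_measure prob_space_beta_measure)
    (auto simp: beta_measure_def)

lemma reg_inc_beta_bounds: "0 < a \<Longrightarrow> 0 < b \<Longrightarrow> reg_inc_beta v a b \<in> {0..1}"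
  unfolding reg_inc_beta_def using prob_space.prob_le_1[OF prob_space_beta_measure] by auto

lemma reg_inc_beta_eq_0: "0 < a \<Longrightarrow> 0 < b \<Longrightarrow> v \<le> 0 \<Longrightarrow> reg_inc_beta v a b = 0"
  by (simp add: reg_inc_beta_eq_integral)

lemma reg_inc_beta_eq_1: "0 < a \<Longrightarrow> 0 < b \<Longrightarrow> 1 \<le> v \<Longrightarrow> reg_inc_beta v a b = 1"
  using integral_unique[OF has_integral_beta_integrand] Beta_real_pos[of a b]
  by (simp add: reg_inc_beta_eq_integral)

lemma integral_beta_integrand_pos:
  assumes a: "0 < a" and b: "0 < b" and vw: "0 \<le> v" "v < w" "w \<le> 1"
  shows "0 < integral {v..w} (beta_integrand a b)"
proof -
  \<comment> \<open>The integrand is discontinuous at 0 (if \<open>a < 1\<close>) and 1 (if \<open>b < 1\<close>), so positivity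
    is checked on the middle half.\<close>
  define v' w' where "v' = (3 * v + w) / 4" and "w' = (v + 3 * w) / 4"
  have v'w': "0 < v'" "v' < w'" "w' < 1" "v \<le> v'" "w' \<le> w"
    using vw unfolding v'_def w'_def by auto
  have "continuous_on (cbox v' w') (beta_integrand a b)"
    unfolding beta_integrand_def cbox_interval using v'w' by (intro continuous_intros) auto
  moreover have "0 < beta_integrand a b ((v' + w') / 2)"
    using v'w' by (intro beta_integrand_pos) auto
  ultimately have "integral {v'..w'} (beta_integrand a b) \<noteq> 0"
    using integral_cbox_eq_0_iff[of v' w' "beta_integrand a b"] v'w'
    by (fastforce simp: beta_integrand_nonneg cbox_interval)
  then have "0 < integral {v'..w'} (beta_integrand a b)"
    using integral_nonneg[OF beta_integrand_integrable_on[OF a b] beta_integrand_nonneg, of v' w'] v'w'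
    by linarith
  also have "\<dots> \<le> integral {v..w} (beta_integrand a b)"
    using v'w' vw
    by (intro integral_subset_le beta_integrand_integrable_on a b) (auto simp: beta_integrand_nonneg)
  finally show ?thesis .
qed

lemma reg_inc_beta_strict_mono:
  assumes a: "0 < a" and b: "0 < b"
  shows "strict_mono_on {0..1} (\<lambda>v. reg_inc_beta v a b)"
proof (rule strict_mono_onI)
  fix v w :: real assume "v \<in> {0..1}" "w \<in> {0..1}" "v < w"
  then have "integral {0..v} (beta_integrand a b) + integral {v..w} (beta_integrand a b) =
      integral {0..w} (beta_integrand a b)"
    by (intro Henstock_Kurzweil_Integration.integral_combine beta_integrand_integrable_on a b) auto
  with integral_beta_integrand_pos[OF a b, of v w] \<open>v \<in> {0..1}\<close> \<open>w \<in> {0..1}\<close> \<open>v < w\<close>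
  show "reg_inc_beta v a b < reg_inc_beta w a b"
    using Beta_real_pos[OF a b] by (simp add: reg_inc_beta_eq_integral[OF a b] divide_strict_right_mono)
qed

lemma isCont_reg_inc_beta:
  assumes a: "0 < a" and b: "0 < b"
  shows "isCont (\<lambda>v. reg_inc_beta v a b) x"
proof -
  have "continuous_on {0..1} (\<lambda>w. integral {0..w} (beta_integrand a b))"
    by (intro indefinite_integral_continuous_1 beta_integrand_integrable_on a b) auto
  then have "continuous_on UNIV (\<lambda>v. integral {0..max 0 (min v 1)} (beta_integrand a b))"
    by (rule continuous_on_compose2[where f = "\<lambda>v. max 0 (min v 1)"]) (auto intro!: continuous_intros)
  then show ?thesis
    unfolding reg_inc_beta_eq_integral[OF a b] using Beta_real_pos[OF a b]
    by (intro continuous_intros) (auto simp: continuous_on_eq_continuous_at)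
qed

lemma tendsto_reg_inc_beta_params:
  fixes an bn :: "nat \<Rightarrow> real"
  assumes an: "an \<longlonglongrightarrow> a" and bn: "bn \<longlonglongrightarrow> b" and a: "0 < a" and b: "0 < b"
    and an_pos: "\<And>n. 0 < an n" and bn_pos: "\<And>n. 0 < bn n"
  shows "(\<lambda>n. reg_inc_beta v (an n) (bn n)) \<longlonglongrightarrow> reg_inc_beta v a b"
proof -
  define w where "w = max 0 (min v 1)"
  have w: "0 \<le> w" "w \<le> 1" unfolding w_def by auto
  have "\<forall>\<^sub>F n in sequentially. a / 2 < an n \<and> b / 2 < bn n"
    using an bn a b by (intro eventually_conj order_tendstoD(1)) auto
  then obtain K where K: "\<And>n. K \<le> n \<Longrightarrow> a / 2 < an n \<and> b / 2 < bn n"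
    unfolding eventually_sequentially by blast
  have "(\<lambda>n. integral {0..w} (beta_integrand (an (n + K)) (bn (n + K)))) \<longlonglongrightarrow>
      integral {0..w} (beta_integrand a b)"
  proof (rule dominated_convergence(2))
    show "beta_integrand (an (n + K)) (bn (n + K)) integrable_on {0..w}" for n
      by (intro beta_integrand_integrable_on an_pos bn_pos w order_refl)
    show "beta_integrand (a / 2) (b / 2) integrable_on {0..w}"
      using a b by (intro beta_integrand_integrable_on w order_refl) auto
    show "norm (beta_integrand (an (n + K)) (bn (n + K)) x) \<le> beta_integrand (a / 2) (b / 2) x"
      if "x \<in> {0..w}" for n x
      using that w K[of "n + K"] by (auto intro!: beta_integrand_mono_params simp: beta_integrand_nonneg)
    show "(\<lambda>n. beta_integrand (an (n + K)) (bn (n + K)) x) \<longlonglongrightarrow> beta_integrand a b x" for x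
      by (intro tendsto_beta_integrand_params LIMSEQ_ignore_initial_segment an bn)
  qed
  then have "(\<lambda>n. integral {0..w} (beta_integrand (an n) (bn n))) \<longlonglongrightarrow> integral {0..w} (beta_integrand a b)"
    by (rule LIMSEQ_offset)
  then have "(\<lambda>n. integral {0..w} (beta_integrand (an n) (bn n)) / Beta (an n) (bn n)) \<longlonglongrightarrow>
      integral {0..w} (beta_integrand a b) / Beta a b"
    using Beta_real_pos[OF a b] by (intro tendsto_divide tendsto_Beta_real an bn a b) auto
  then show ?thesis
    unfolding reg_inc_beta_eq_integral[OF a b] reg_inc_beta_eq_integral[OF an_pos bn_pos] w_def .
qed

lemma tendsto_mono_fun_seq:
  fixes f :: "nat \<Rightarrow> real \<Rightarrow> real"
  assumes mono: "\<And>n. mono (f n)" and conv: "\<And>x. (\<lambda>n. f n x) \<longlonglongrightarrow> g x"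
    and cont: "isCont g u" and un: "un \<longlonglongrightarrow> u"
  shows "(\<lambda>n. f n (un n)) \<longlonglongrightarrow> g u"
proof (rule order_tendstoI)
  fix y assume "y < g u"
  then have "\<forall>\<^sub>F w in at_left u. y < g w"
    using cont by (intro order_tendstoD(1)) (auto simp: isCont_def filterlim_at_split)
  then obtain b where "b < u" and b: "\<And>w. b < w \<Longrightarrow> w < u \<Longrightarrow> y < g w"
    by (auto simp: eventually_at_left_field)
  have "\<forall>\<^sub>F n in sequentially. y < f n ((b + u) / 2)"
    using \<open>b < u\<close> by (intro order_tendstoD(1)[OF conv] b) auto
  moreover have "\<forall>\<^sub>F n in sequentially. (b + u) / 2 < un n"
    using \<open>b < u\<close> by (intro order_tendstoD(1)[OF un]) auto
  ultimately show "\<forall>\<^sub>F n in sequentially. y < f n (un n)"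
  proof eventually_elim
    case (elim n)
    then show ?case using monoD[OF mono[of n], of "(b + u) / 2" "un n"] by linarith
  qed
next
  fix y assume "g u < y"
  then have "\<forall>\<^sub>F w in at_right u. g w < y"
    using cont by (intro order_tendstoD(2)) (auto simp: isCont_def filterlim_at_split)
  then obtain b where "u < b" and b: "\<And>w. u < w \<Longrightarrow> w < b \<Longrightarrow> g w < y"
    by (auto simp: eventually_at_right_field)
  have "\<forall>\<^sub>F n in sequentially. f n ((u + b) / 2) < y"
    using \<open>u < b\<close> by (intro order_tendstoD(2)[OF conv] b) auto
  moreover have "\<forall>\<^sub>F n in sequentially. un n < (u + b) / 2"
    using \<open>u < b\<close> by (intro order_tendstoD(2)[OF un]) auto
  ultimately show "\<forall>\<^sub>F n in sequentially. f n (un n) < y"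
  proof eventually_elim
    case (elim n)
    then show ?case using monoD[OF mono[of n], of "un n" "(u + b) / 2"] by linarith
  qed
qed

lemma tendsto_arg_of_mono_fun_seq:
  fixes f :: "nat \<Rightarrow> real \<Rightarrow> real"
  assumes mono: "\<And>n. mono (f n)" and conv: "\<And>x. (\<lambda>n. f n x) \<longlonglongrightarrow> g x"
    and strict: "strict_mono_on {0..1} g"
    and q: "\<And>n. q n \<in> {0..1}" and c: "c \<in> {0..1}"
    and fq: "(\<lambda>n. f n (q n)) \<longlonglongrightarrow> g c"
  shows "q \<longlonglongrightarrow> c"
proof (rule order_tendstoI)
  fix y assume "y < c"
  show "\<forall>\<^sub>F n in sequentially. y < q n"
  proof (cases "y < 0")
    case True
    then show ?thesis using q by (auto intro: always_eventually less_le_trans)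
  next
    case False
    with \<open>y < c\<close> c have "g y < g c" by (auto intro: strict_mono_onD[OF strict])
    then have "\<forall>\<^sub>F n in sequentially. f n y < (g y + g c) / 2"
      by (intro order_tendstoD(2)[OF conv]) simp
    moreover have "\<forall>\<^sub>F n in sequentially. (g y + g c) / 2 < f n (q n)"
      using \<open>g y < g c\<close> by (intro order_tendstoD(1)[OF fq]) simp
    ultimately show ?thesis
    proof eventually_elim
      case (elim n)
      then show ?case using monoD[OF mono[of n], of "q n" y] by linarith
    qed
  qed
next
  fix y assume "c < y"
  show "\<forall>\<^sub>F n in sequentially. q n < y"
  proof (cases "1 < y")
    case True
    then show ?thesis using q by (auto intro: always_eventually le_less_trans)
  next
    case False
    with \<open>c < y\<close> c have "g c < g y" by (auto intro: strict_mono_onD[OF strict])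
    then have "\<forall>\<^sub>F n in sequentially. (g y + g c) / 2 < f n y"
      by (intro order_tendstoD(1)[OF conv]) simp
    moreover have "\<forall>\<^sub>F n in sequentially. f n (q n) < (g y + g c) / 2"
      using \<open>g c < g y\<close> by (intro order_tendstoD(2)[OF fq]) simp
    ultimately show ?thesis
    proof eventually_elim
      case (elim n)
      then show ?case using monoD[OF mono[of n], of y "q n"] by linarith
    qed
  qed
qed

lemma reg_inc_beta_inverse:
  assumes a: "0 < a" and b: "0 < b" and t: "t \<in> {0..1}"
  shows "the_inv_into {0..1} (\<lambda>v. reg_inc_beta v a b) t \<in> {0..1}"
    and "reg_inc_beta (the_inv_into {0..1} (\<lambda>v. reg_inc_beta v a b) t) a b = t"
proof -
  have inj: "inj_on (\<lambda>v. reg_inc_beta v a b) {0..1}"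
    by (rule strict_mono_on_imp_inj_on[OF reg_inc_beta_strict_mono[OF a b]])
  have "continuous_on {0..1} (\<lambda>v. reg_inc_beta v a b)"
    by (intro continuous_at_imp_continuous_on ballI isCont_reg_inc_beta a b)
  then have im: "t \<in> (\<lambda>v. reg_inc_beta v a b) ` {0..1}"
    using IVT'[of "\<lambda>v. reg_inc_beta v a b" 0 t 1] t reg_inc_beta_eq_0[OF a b] reg_inc_beta_eq_1[OF a b]
    by force
  then show "the_inv_into {0..1} (\<lambda>v. reg_inc_beta v a b) t \<in> {0..1}"
    and "reg_inc_beta (the_inv_into {0..1} (\<lambda>v. reg_inc_beta v a b) t) a b = t"
    using the_inv_into_into[OF inj im order_refl] f_the_inv_into_f[OF inj im] by auto
qed

lemma Upsilon_eq:
  "Upsilon al bl j v =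
     the_inv_into {0..1} (\<lambda>w. reg_inc_beta w (al (Suc j)) (bl (Suc j))) (reg_inc_beta v (al j) (bl j))"
  by (simp add: Upsilon_def Gfun_def[abs_def])

lemma
  assumes "\<And>i. i \<in> {j, Suc j} \<Longrightarrow> 0 < al i" and "\<And>i. i \<in> {j, Suc j} \<Longrightarrow> 0 < bl i"
  shows Upsilon_bounds: "Upsilon al bl j v \<in> {0..1}"
    and reg_inc_beta_Upsilon:
      "reg_inc_beta (Upsilon al bl j v) (al (Suc j)) (bl (Suc j)) = reg_inc_beta v (al j) (bl j)"
  using reg_inc_beta_inverse[OF _ _ reg_inc_beta_bounds, of "al (Suc j)" "bl (Suc j)" "al j" "bl j" v] assms
  by (auto simp: Upsilon_eq)

lemma tendsto_Upsilon:
  assumes al_pos: "\<And>n i. i \<in> {j, Suc j} \<Longrightarrow> 0 < al n i"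
    and bl_pos: "\<And>n i. i \<in> {j, Suc j} \<Longrightarrow> 0 < bl n i"
    and al_lim_pos: "\<And>i. i \<in> {j, Suc j} \<Longrightarrow> 0 < al_lim i"
    and bl_lim_pos: "\<And>i. i \<in> {j, Suc j} \<Longrightarrow> 0 < bl_lim i"
    and al_conv: "\<And>i. i \<in> {j, Suc j} \<Longrightarrow> (\<lambda>n. al n i) \<longlonglongrightarrow> al_lim i"
    and bl_conv: "\<And>i. i \<in> {j, Suc j} \<Longrightarrow> (\<lambda>n. bl n i) \<longlonglongrightarrow> bl_lim i"
    and us_conv: "us \<longlonglongrightarrow> u"
  shows "(\<lambda>n. Upsilon (al n) (bl n) j (us n)) \<longlonglongrightarrow> Upsilon al_lim bl_lim j u"
proof -
  have j: "j \<in> {j, Suc j}" and Suc_j: "Suc j \<in> {j, Suc j}"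
    by simp_all
  have G_mono: "mono (\<lambda>v. reg_inc_beta v (al n i) (bl n i))" if "i \<in> {j, Suc j}" for n i
    using reg_inc_beta_mono[OF al_pos[OF that] bl_pos[OF that]] .
  have G_conv: "(\<lambda>n. reg_inc_beta v (al n i) (bl n i)) \<longlonglongrightarrow> reg_inc_beta v (al_lim i) (bl_lim i)"
    if "i \<in> {j, Suc j}" for i v
    using tendsto_reg_inc_beta_params[OF al_conv[OF that] bl_conv[OF that] al_lim_pos[OF that]
        bl_lim_pos[OF that] al_pos[OF that] bl_pos[OF that]] .
  have "(\<lambda>n. reg_inc_beta (us n) (al n j) (bl n j)) \<longlonglongrightarrow> reg_inc_beta u (al_lim j) (bl_lim j)"
    using G_mono[OF j] G_conv[OF j] isCont_reg_inc_beta[OF al_lim_pos[OF j] bl_lim_pos[OF j]] us_conv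
    by (rule tendsto_mono_fun_seq)
  moreover have "reg_inc_beta (Upsilon (al n) (bl n) j (us n)) (al n (Suc j)) (bl n (Suc j)) =
      reg_inc_beta (us n) (al n j) (bl n j)" for n
    using al_pos bl_pos by (rule reg_inc_beta_Upsilon)
  moreover have "reg_inc_beta (Upsilon al_lim bl_lim j u) (al_lim (Suc j)) (bl_lim (Suc j)) =
      reg_inc_beta u (al_lim j) (bl_lim j)"
    using al_lim_pos bl_lim_pos by (rule reg_inc_beta_Upsilon)
  ultimately have G_Upsilon_conv:
    "(\<lambda>n. reg_inc_beta (Upsilon (al n) (bl n) j (us n)) (al n (Suc j)) (bl n (Suc j))) \<longlonglongrightarrow>
      reg_inc_beta (Upsilon al_lim bl_lim j u) (al_lim (Suc j)) (bl_lim (Suc j))"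
    by simp
  have q_bounds: "Upsilon (al n) (bl n) j (us n) \<in> {0..1}" for n
    using al_pos bl_pos by (rule Upsilon_bounds)
  have c_bounds: "Upsilon al_lim bl_lim j u \<in> {0..1}"
    using al_lim_pos bl_lim_pos by (rule Upsilon_bounds)
  show ?thesis
    by (rule tendsto_arg_of_mono_fun_seq[OF G_mono[OF Suc_j] G_conv[OF Suc_j]
          reg_inc_beta_strict_mono[OF al_lim_pos[OF Suc_j] bl_lim_pos[OF Suc_j]] q_bounds c_bounds G_Upsilon_conv])
qed

definition beta_binomial_density :: "nat \<Rightarrow> real \<Rightarrow> real \<Rightarrow> real \<Rightarrow> real \<Rightarrow> real" where
  "beta_binomial_density N a b p x =
     (\<Sum>z\<le>N. Bernstein N z p * beta_density (a + real z) (b + real (N - z)) x)"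

definition beta_binomial_sq_dev :: "real \<Rightarrow> real \<Rightarrow> real \<Rightarrow> real \<Rightarrow> real" where
  "beta_binomial_sq_dev N a b p =
     (2 * p * (1 - p) * N + a * (a + 1) - 2 * p * a * (a + b + 1) + p\<^sup>2 * (a + b) * (a + b + 1)) /
     ((a + b + N) * (a + b + N + 1))"

lemma bb_kernel_eq_density:
  "bb_kernel N al bl j v =
     density lborel (beta_binomial_density N (al (Suc j)) (bl (Suc j)) (Upsilon al bl j v))"
  unfolding bb_kernel_def beta_binomial_density_def Bernstein_def Let_def atLeast0AtMost
  by (simp add: mult_ac)

lemma borel_measurable_beta_binomial_density [measurable]:
  "beta_binomial_density N a b p \<in> borel_measurable borel"
  unfolding beta_binomial_density_def by measurable

lemma beta_binomial_density_nonneg: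
  "0 < a \<Longrightarrow> 0 < b \<Longrightarrow> p \<in> {0..1} \<Longrightarrow> 0 \<le> beta_binomial_density N a b p x"
  unfolding beta_binomial_density_def
  by (intro sum_nonneg mult_nonneg_nonneg Bernstein_nonneg beta_density_nonneg) auto

lemma has_integral_beta_binomial_density:
  assumes "0 < a" "0 < b"
  shows "(beta_binomial_density N a b p has_integral 1) UNIV"
proof -
  have "(beta_binomial_density N a b p has_integral (\<Sum>z\<le>N. Bernstein N z p * 1)) UNIV"
    unfolding beta_binomial_density_def[abs_def]
    using assms by (intro has_integral_sum has_integral_mult_right has_integral_beta_density) auto
  then show ?thesis by simp
qed

lemma has_integral_beta_binomial_density_sq_dev:
  assumes a: "0 < a" and b: "0 < b"
  shows "((\<lambda>x. (x - p)\<^sup>2 * beta_binomial_density N a b p x) has_integral beta_binomial_sq_dev N a b p) UNIV"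
proof -
  define S where "S = a + b + real N"
  have S_pos: "0 < S"
    using a b by (simp add: S_def)
  define A B where "A = 1 / (S * (S + 1))" and "B = 1 / S"
  have S_eq: "a + real z + (b + real (N - z)) = S" if "z \<le> N" for z
    using that by (simp add: S_def of_nat_diff)
  let ?m = "\<lambda>z. (a + z) * (a + z + 1) * A - 2 * p * (a + z) * B + p\<^sup>2"
  have "((\<lambda>x. (x - p)\<^sup>2 * beta_density (a + real z) (b + real (N - z)) x) has_integral ?m z) UNIV"
    if "z \<le> N" for z
    using has_integral_beta_density_sq_dev[of "a + real z" "b + real (N - z)" p] a b
    unfolding S_eq[OF that] by (simp add: A_def B_def)
  then have "((\<lambda>x. \<Sum>z\<le>N. Bernstein N z p * ((x - p)\<^sup>2 * beta_density (a + real z) (b + real (N - z)) x))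
      has_integral (\<Sum>z\<le>N. Bernstein N z p * ?m z)) UNIV"
    by (intro has_integral_sum has_integral_mult_right) auto
  moreover have "(\<Sum>z\<le>N. Bernstein N z p * ?m z) =
      (\<Sum>z\<le>N. A * (real z * (real z - 1) * Bernstein N z p) + ((2 * a + 2) * A - 2 * p * B) * (real z * Bernstein N z p)
        + (a * (a + 1) * A - 2 * p * a * B + p\<^sup>2) * Bernstein N z p)"
    by (intro sum.cong) (simp_all add: algebra_simps)
  moreover have "\<dots> = A * (real N * (real N - 1) * p\<^sup>2) + ((2 * a + 2) * A - 2 * p * B) * (real N * p)
      + (a * (a + 1) * A - 2 * p * a * B + p\<^sup>2)"
    by (simp only: sum.distrib flip: sum_distrib_left) simp
  moreover have "\<dots> = (real N * (real N - 1) * p\<^sup>2 + (2 * a + 2) * real N * p + a * (a + 1)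
      - 2 * p * (real N * p + a) * (S + 1) + p\<^sup>2 * S * (S + 1)) / (S * (S + 1))"
    using S_pos unfolding A_def B_def by (simp add: divide_simps) (simp add: algebra_simps)
  moreover have "\<dots> = beta_binomial_sq_dev N a b p"
    unfolding beta_binomial_sq_dev_def by (simp add: S_def power2_eq_square algebra_simps)
  ultimately show ?thesis
    by (simp add: beta_binomial_density_def sum_distrib_left mult_ac)
qed

lemma beta_binomial_sq_dev_eq_inverse:
  fixes N :: real
  assumes "0 < N" "0 < a + b"
  shows "beta_binomial_sq_dev N a b p =
    (2 * p * (1 - p) * (1 / N) + (a * (a + 1) - 2 * p * a * (a + b + 1) + p\<^sup>2 * (a + b) * (a + b + 1)) * (1 / N)\<^sup>2)
    / ((1 + (a + b) * (1 / N)) * (1 + (a + b) * (1 / N) + 1 / N))"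
  using assms unfolding beta_binomial_sq_dev_def
  by (simp add: divide_simps add_pos_pos) (simp add: algebra_simps power2_eq_square)

lemma beta_binomial_sq_dev_tendsto_0:
  fixes N :: "nat \<Rightarrow> nat" and a b p :: "nat \<Rightarrow> real"
  assumes N: "filterlim N at_top sequentially" and a: "a \<longlonglongrightarrow> a0" and b: "b \<longlonglongrightarrow> b0"
    and p: "p \<longlonglongrightarrow> c" and pos: "\<And>n. 0 < a n + b n"
  shows "(\<lambda>n. beta_binomial_sq_dev (N n) (a n) (b n) (p n)) \<longlonglongrightarrow> 0"
proof -
  let ?h = "\<lambda>n. 1 / real (N n)"
  let ?K = "\<lambda>a b p. a * (a + 1) - 2 * p * a * (a + b + 1) + p\<^sup>2 * (a + b) * (a + b + 1)"
  let ?F = "\<lambda>n. (2 * p n * (1 - p n) * ?h n + ?K (a n) (b n) (p n) * (?h n)\<^sup>2)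
      / ((1 + (a n + b n) * ?h n) * (1 + (a n + b n) * ?h n + ?h n))"
  have N_real: "filterlim (\<lambda>n. real (N n)) at_top sequentially"
    by (rule filterlim_compose[OF filterlim_real_sequentially N])
  then have "\<forall>\<^sub>F n in sequentially. 0 < real (N n)"
    by (rule filterlim_at_top_dense[THEN iffD1, rule_format])
  then have F_eq: "\<forall>\<^sub>F n in sequentially. ?F n = beta_binomial_sq_dev (N n) (a n) (b n) (p n)"
    by eventually_elim (simp add: beta_binomial_sq_dev_eq_inverse pos)
  have h: "?h \<longlonglongrightarrow> 0"
    using tendsto_inverse_0_at_top[OF N_real] by (simp add: inverse_eq_divide)
  have "?F \<longlonglongrightarrow> (2 * c * (1 - c) * 0 + ?K a0 b0 c * 0\<^sup>2) / ((1 + (a0 + b0) * 0) * (1 + (a0 + b0) * 0 + 0))"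
    by (intro tendsto_intros a b p h) simp
  with F_eq show ?thesis
    by (simp add: tendsto_cong)
qed

lemma weak_conv_m_beta_binomial:
  fixes N :: "nat \<Rightarrow> nat" and a b p :: "nat \<Rightarrow> real"
  assumes N: "filterlim N at_top sequentially" and a: "a \<longlonglongrightarrow> a0" and b: "b \<longlonglongrightarrow> b0"
    and a_pos: "\<And>n. 0 < a n" and b_pos: "\<And>n. 0 < b n"
    and p: "p \<longlonglongrightarrow> c" and p_bounds: "\<And>n. p n \<in> {0..1}"
  shows "weak_conv_m (\<lambda>n. density lborel (beta_binomial_density (N n) (a n) (b n) (p n))) (return lborel c)"
proof (rule weak_conv_m_return_if_concentrating[OF _ _ p])
  show "prob_space (density lborel (beta_binomial_density (N n) (a n) (b n) (p n)))" for n
    by (intro prob_space_density_has_integral has_integral_beta_binomial_density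
        beta_binomial_density_nonneg a_pos b_pos p_bounds) simp
  have sq_dev: "(\<lambda>n. beta_binomial_sq_dev (N n) (a n) (b n) (p n)) \<longlonglongrightarrow> 0"
    using a_pos b_pos by (intro beta_binomial_sq_dev_tendsto_0[OF N a b p] add_pos_pos)
  fix d :: real assume "0 < d"
  show "(\<lambda>n. measure (density lborel (beta_binomial_density (N n) (a n) (b n) (p n)))
      {x. d \<le> \<bar>x - p n\<bar>}) \<longlonglongrightarrow> 0"
  proof (rule tendsto_sandwich[OF _ _ tendsto_const])
    show "(\<lambda>n. beta_binomial_sq_dev (N n) (a n) (b n) (p n) / d\<^sup>2) \<longlonglongrightarrow> 0"
      using tendsto_divide_zero[OF sq_dev] .
    show "\<forall>\<^sub>F n in sequentially. measure (density lborel (beta_binomial_density (N n) (a n) (b n) (p n)))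
        {x. d \<le> \<bar>x - p n\<bar>} \<le> beta_binomial_sq_dev (N n) (a n) (b n) (p n) / d\<^sup>2"
      using \<open>0 < d\<close>
      by (intro always_eventually allI measure_density_Chebyshev beta_binomial_density_nonneg
          has_integral_beta_binomial_density_sq_dev a_pos b_pos p_bounds) simp_all
  qed simp
qed simp

theorem mainTheorem11:
  fixes N :: "nat \<Rightarrow> nat"
    and al bl :: "nat \<Rightarrow> nat \<Rightarrow> real"
    and al_lim bl_lim :: "nat \<Rightarrow> real"
    and j :: nat
    and us :: "nat \<Rightarrow> real" and u :: real
  assumes N_lim: "filterlim N at_top sequentially"
    and al_pos: "\<And>n i. i \<ge> 1 \<Longrightarrow> al n i > 0"
    and bl_pos: "\<And>n i. i \<ge> 1 \<Longrightarrow> bl n i > 0"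
    and al_lim_pos: "\<And>i. i \<ge> 1 \<Longrightarrow> al_lim i > 0"
    and bl_lim_pos: "\<And>i. i \<ge> 1 \<Longrightarrow> bl_lim i > 0"
    and al_conv: "\<And>i. i \<ge> 1 \<Longrightarrow> (\<lambda>n. al n i) \<longlonglongrightarrow> al_lim i"
    and bl_conv: "\<And>i. i \<ge> 1 \<Longrightarrow> (\<lambda>n. bl n i) \<longlonglongrightarrow> bl_lim i"
    and j_ge: "j \<ge> 1"
    and us_range: "\<And>n. us n \<in> {0..1}"
    and u_range: "u \<in> {0..1}"
    and us_conv: "us \<longlonglongrightarrow> u"
  shows "weak_conv_m (\<lambda>n. bb_kernel (N n) (al n) (bl n) j (us n))
                     (return lborel (Upsilon al_lim bl_lim j u))"
proof -
  have idx: "i \<in> {j, Suc j} \<Longrightarrow> 1 \<le> i" for i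
    using j_ge by auto
  have Suc_j: "1 \<le> Suc j"
    by simp
  have p_conv: "(\<lambda>n. Upsilon (al n) (bl n) j (us n)) \<longlonglongrightarrow> Upsilon al_lim bl_lim j u"
    by (rule tendsto_Upsilon[OF al_pos[OF idx] bl_pos[OF idx] al_lim_pos[OF idx] bl_lim_pos[OF idx]
        al_conv[OF idx] bl_conv[OF idx] us_conv])
  have p_bounds: "Upsilon (al n) (bl n) j (us n) \<in> {0..1}" for n
    by (rule Upsilon_bounds[OF al_pos[OF idx] bl_pos[OF idx]])
  show ?thesis
    unfolding bb_kernel_eq_density
    by (rule weak_conv_m_beta_binomial[OF N_lim al_conv[OF Suc_j] bl_conv[OF Suc_j]
          al_pos[OF Suc_j] bl_pos[OF Suc_j] p_conv p_bounds])
qed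

end
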